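(* Let $n$ be odd and, with $\Gamma_i$ the irreducible character of $S_n$ labelled by the hook partition $[i,1^{n-i}]$ ($\Gamma_1$ corresponding to $[1^n]$), set $\Gamma^e=\Gamma_2+\Gamma_4+\cdots+\Gamma_{n-1}$ and $\Gamma^o=\Gamma_1+\Gamma_3+\cdots+\Gamma_n$. Then (a) $\Gamma^e$ and $\Gamma^o$ vanish on all elements of $S_n$ of even order; (b) $\Gamma^e$ is Steinberg-like for $p=2$ (i.e. additionally $\Gamma^e(1)=|S_n|_2$) if and only if $n=2^k+1$ for some integer $k>0$.
   Context: $|S_n|_2$ denotes the $2$-part of $n!$. A character is Steinberg-like for $p=2$ if it vanishes on all elements of even order and its degree equals the order of a Sylow $2$-subgroup. *)

theory Defs
  imports "HOL-Combinatorics.Permutations" "HOL-Library.FuncSet" "HOL-Computational_Algebra.Primes"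
begin

definition perm_order :: "(nat \<Rightarrow> nat) \<Rightarrow> nat" where
  "perm_order \<sigma> = (LEAST k. 0 < k \<and> (\<sigma> ^^ k) = id)"

text \<open>Irreducible character of S_n labelled by the partition lam (given as a
  zero-padded function, lam 0 \<ge> lam 1 \<ge> ...), via the Frobenius character formula:
  chi^lam(sigma) = coefficient of x^(lam+delta) in a_delta * p_(cycle type of sigma),
  with n variables, delta_i = n-1-i.  The coefficient of x^beta in p_rho is the number
  of sigma-invariant colourings f of {..<n} with colour class sizes beta.\<close>
definition frob_char :: "nat \<Rightarrow> (nat \<Rightarrow> nat) \<Rightarrow> (nat \<Rightarrow> nat) \<Rightarrow> int" where
  "frob_char n lam \<sigma> =
     (\<Sum>\<pi> | \<pi> permutes {..<n}. sign \<pi> *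
        int (card {f \<in> {..<n} \<rightarrow>\<^sub>E {..<n}.
                 (\<forall>x<n. f (\<sigma> x) = f x) \<and>
                 (\<forall>i<n. int (card {x. x < n \<and> f x = i})
                        = int (lam i) + int (n - 1 - i) - int (n - 1 - \<pi> i))}))"

definition hook :: "nat \<Rightarrow> nat \<Rightarrow> nat \<Rightarrow> nat" where
  "hook n i j = (if j = 0 then i else if j \<le> n - i then 1 else 0)"

definition Gamma :: "nat \<Rightarrow> nat \<Rightarrow> (nat \<Rightarrow> nat) \<Rightarrow> int" where
  "Gamma n i \<sigma> = frob_char n (hook n i) \<sigma>"

definition Gamma_e :: "nat \<Rightarrow> (nat \<Rightarrow> nat) \<Rightarrow> int" where
  "Gamma_e n \<sigma> = (\<Sum>i | i \<in> {1..n} \<and> even i. Gamma n i \<sigma>)"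

definition Gamma_o :: "nat \<Rightarrow> (nat \<Rightarrow> nat) \<Rightarrow> int" where
  "Gamma_o n \<sigma> = (\<Sum>i | i \<in> {1..n} \<and> odd i. Gamma n i \<sigma>)"

definition steinberg_like2 :: "nat \<Rightarrow> ((nat \<Rightarrow> nat) \<Rightarrow> int) \<Rightarrow> bool" where
  "steinberg_like2 n \<chi> \<longleftrightarrow>
     (\<forall>\<sigma>. \<sigma> permutes {..<n} \<and> even (perm_order \<sigma>) \<longrightarrow> \<chi> \<sigma> = 0) \<and>
     \<chi> id = 2 ^ multiplicity (2::nat) (fact n)"

end

theory Submission
  imports Defs "HOL-Combinatorics.Orbits"
begin

text \<open>Let \<open>A(\<sigma>)\<close> and \<open>D(\<sigma>)\<close> be the sum and the alternating sum over \<open>p\<close> of the hook characters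
  \<open>\<chi>^[m - p, 1^p]\<close> at \<open>\<sigma>\<close>. For odd \<open>n\<close> the leg \<open>n - i\<close> of \<open>\<Gamma>_i\<close> has the parity opposite to \<open>i\<close>, so
  \<open>2 \<Gamma>^e = A - D\<close> and \<open>2 \<Gamma>^o = A + D\<close>. By the Murnaghan-Nakayama rule for hooks, deleting a cycle
  of length \<open>l\<close> from \<open>\<sigma>\<close> (leaving \<open>\<sigma>'\<close>) gives \<open>A(\<sigma>) = (1 + (-1)^(l-1)) A(\<sigma>')\<close> and \<open>D(\<sigma>) = 0\<close>,
  unless that cycle is all of \<open>\<sigma>\<close>. An element of even order has a cycle of even length, which
  cannot be all of the odd set \<open>{..<n}\<close>; hence \<open>A = D = 0\<close> there. At the identity the same
  recursion gives \<open>A = 2^(n-1)\<close> and \<open>D = 0\<close>, so \<open>\<Gamma>^e(1) = 2^(n-2)\<close>; and \<open>\<nu>_2(n!) = n - 2\<close> iff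
  \<open>n - 1\<close> is a power of 2, since \<open>\<nu>_2(m!) \<le> m - 1\<close> with equality exactly for powers of 2.
  To peel off cycles one at a time, the Frobenius formula is generalised to the restriction
  of \<open>\<sigma>\<close> to an invariant subset.\<close>

section \<open>Orbits and the order of a permutation\<close>

lemma orbit_subset_invariant:
  assumes "\<sigma> ` X \<subseteq> X" "x \<in> X"
  shows "orbit \<sigma> x \<subseteq> X"
proof
  fix y assume "y \<in> orbit \<sigma> x"
  then show "y \<in> X"
    using assms by induction auto
qed

lemma image_Diff_orbit_subset:
  assumes "permutation \<sigma>" "\<sigma> ` X \<subseteq> X"
  shows "\<sigma> ` (X - orbit \<sigma> x) \<subseteq> X - orbit \<sigma> x"
proof safe
  fix y assume "y \<in> X" "y \<notin> orbit \<sigma> x"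
  then show "\<sigma> y \<in> X"
    using assms(2) by auto
  assume "\<sigma> y \<in> orbit \<sigma> x"
  moreover have "y \<in> orbit \<sigma> (\<sigma> y)"
    using assms(1) by (simp add: permutation_orbit_step permutation_self_in_orbit)
  ultimately show False
    using \<open>y \<notin> orbit \<sigma> x\<close> orbit_trans by metis
qed

lemma invariant_const_on_orbit:
  assumes "\<forall>x\<in>X. f (\<sigma> x) = f x" "\<sigma> ` X \<subseteq> X" "x \<in> X" "y \<in> orbit \<sigma> x"
  shows "f y = f x"
  using assms(4)
proof (induction rule: orbit.induct)
  case (step y)
  then have "y \<in> X"
    using orbit_subset_invariant[OF assms(2,3)] by blast
  with step.IH show ?case
    using assms(1) by simp
qed (use assms in simp)

lemma card_orbit_Diff:
  assumes "permutation \<sigma>" "finite X" "\<sigma> ` X \<subseteq> X" "x0 \<in> X"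
  shows "card X = card (X - orbit \<sigma> x0) + card (orbit \<sigma> x0)" "0 < card (orbit \<sigma> x0)"
proof -
  have "orbit \<sigma> x0 \<subseteq> X" "x0 \<in> orbit \<sigma> x0"
    using orbit_subset_invariant[OF assms(3,4)] permutation_self_in_orbit[OF assms(1)] by auto
  moreover from this have "finite (orbit \<sigma> x0)"
    using assms(2) finite_subset by blast
  ultimately show "card X = card (X - orbit \<sigma> x0) + card (orbit \<sigma> x0)" "0 < card (orbit \<sigma> x0)"
    using assms(2) by (auto simp: card_Diff_subset card_mono card_gt_0_iff)
qed

lemma orbit_id [simp]: "orbit id x = {x}"
  by (simp add: orbit_eq_singleton_iff)

lemma funpow_card_orbit:
  assumes "permutation \<sigma>"
  shows "(\<sigma> ^^ card (orbit \<sigma> x)) x = x"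
proof -
  have x: "x \<in> orbit \<sigma> x"
    by (rule permutation_self_in_orbit[OF assms])
  have "card (orbit \<sigma> x) = funpow_dist1 \<sigma> x x"
    unfolding orbit_conv_funpow_dist1[OF x] using card_image[OF inj_on_funpow_dist1[OF x]] by simp
  then show ?thesis
    using funpow_dist1_prop[OF x] by simp
qed

lemma perm_order_dvd:
  assumes "0 < k" "\<sigma> ^^ k = id"
  shows "perm_order \<sigma> dvd k"
proof -
  let ?m = "perm_order \<sigma>"
  have m: "0 < ?m" "\<sigma> ^^ ?m = id"
    using LeastI[of "\<lambda>k. 0 < k \<and> \<sigma> ^^ k = id", OF conjI[OF assms]] unfolding perm_order_def by auto
  have "\<sigma> ^^ (k mod ?m) = id"
    using funpow_mod_eq[where f = \<sigma> and n = ?m and m = k] m(2) assms(2) by (auto simp: fun_eq_iff)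
  moreover have "k mod ?m < ?m"
    using m(1) by simp
  ultimately have "\<not> 0 < k mod ?m"
    using Least_le[of "\<lambda>k. 0 < k \<and> \<sigma> ^^ k = id" "k mod ?m"] unfolding perm_order_def by auto
  then show ?thesis
    by auto
qed

lemma even_orbit_if_even_perm_order:
  assumes "\<sigma> permutes {..<n}" "even (perm_order \<sigma>)"
  shows "\<exists>x<n. even (card (orbit \<sigma> x))"
proof (rule ccontr)
  assume "\<not> (\<exists>x<n. even (card (orbit \<sigma> x)))"
  then have "odd (\<Prod>x<n. card (orbit \<sigma> x))" (is "odd ?L")
    by (simp add: even_prod_iff)
  have "(\<sigma> ^^ ?L) x = x" for x
  proof (cases "x < n")
    case True
    then have "card (orbit \<sigma> x) dvd ?L"
      by (intro dvd_prodI) auto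
    moreover have "(\<sigma> ^^ card (orbit \<sigma> x)) x = x"
      by (rule funpow_card_orbit[OF permutes_imp_permutation[OF finite_lessThan assms(1)]])
    ultimately show ?thesis
      using funpow_mod_eq[where f = \<sigma> and n = "card (orbit \<sigma> x)" and x = x and m = ?L] by simp
  next
    case False
    then have "\<sigma> x = x"
      using permutes_not_in[OF assms(1)] by simp
    then have "(\<sigma> ^^ k) x = x" for k
      by (induction k) auto
    then show ?thesis .
  qed
  then have "perm_order \<sigma> dvd ?L"
    using \<open>odd ?L\<close> by (intro perm_order_dvd) (auto simp: fun_eq_iff odd_pos)
  with \<open>odd ?L\<close> assms(2) show False
    using dvd_trans by blast
qed

section \<open>The 2-adic valuation of factorials\<close>

lemma multiplicity_fact_Suc:
  assumes "prime p"
  shows "multiplicity p (fact (Suc m) :: nat) = multiplicity p (Suc m) + multiplicity p (fact m :: nat)"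
proof -
  have "(fact (Suc m) :: nat) = Suc m * fact m"
    by (simp only: fact_Suc of_nat_id)
  then show ?thesis
    using assms by (simp only:) (rule prime_elem_multiplicity_mult_distrib; simp)
qed

lemma multiplicity_two_fact_double:
  "multiplicity 2 (fact (2 * m) :: nat) = m + multiplicity 2 (fact m :: nat)"
proof (induction m)
  case (Suc m)
  have "multiplicity (2::nat) (2 * Suc m) = Suc (multiplicity 2 (Suc m))"
    by (rule multiplicity_times_same) simp_all
  moreover have "multiplicity (2::nat) (Suc (2 * m)) = 0"
    by (rule not_dvd_imp_multiplicity_0) simp
  moreover have "2 * Suc m = Suc (Suc (2 * m))"
    by simp
  ultimately show ?case
    using Suc.IH by (simp only: multiplicity_fact_Suc[OF two_is_prime_nat])
qed simp

lemma multiplicity_two_fact_Suc_double: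
  "multiplicity 2 (fact (Suc (2 * m)) :: nat) = multiplicity 2 (fact (2 * m) :: nat)"
proof -
  have "multiplicity (2::nat) (Suc (2 * m)) = 0"
    by (rule not_dvd_imp_multiplicity_0) simp
  then show ?thesis
    by (simp only: multiplicity_fact_Suc[OF two_is_prime_nat])
qed

lemma multiplicity_two_fact_le: "multiplicity 2 (fact m :: nat) \<le> m - 1"
proof (induction m rule: less_induct)
  case (less m)
  show ?case
  proof (cases "m < 2")
    case True
    then show ?thesis
      by (auto simp: less_2_cases_iff)
  next
    case False
    then have IH: "multiplicity 2 (fact (m div 2) :: nat) \<le> m div 2 - 1"
      by (intro less.IH) auto
    obtain k where "m = 2 * k \<or> m = Suc (2 * k)"
      by (metis oddE evenE Suc_eq_plus1)
    then show ?thesis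
      using IH False multiplicity_two_fact_double[of k] multiplicity_two_fact_Suc_double[of k] by auto
  qed
qed

lemma multiplicity_two_fact_eq_iff:
  assumes "0 < m"
  shows "multiplicity 2 (fact m :: nat) = m - 1 \<longleftrightarrow> (\<exists>k. m = 2 ^ k)"
  using assms
proof (induction m rule: less_induct)
  case (less m)
  show ?case
  proof (cases "m = 1")
    case True
    then show ?thesis
      by (auto intro: exI[of _ 0])
  next
    case False
    obtain k where "m = 2 * k \<or> m = Suc (2 * k)"
      by (metis oddE evenE Suc_eq_plus1)
    moreover from this have "0 < k"
      using less.prems False by auto
    ultimately consider "m = 2 * k" | "m = Suc (2 * k)"
      by blast
    then show ?thesis
    proof cases
      case 1
      have "(\<exists>j. k = 2 ^ j) \<longleftrightarrow> (\<exists>j. m = 2 ^ j)"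
      proof
        assume "\<exists>j. m = 2 ^ j"
        then obtain j where j: "2 * k = 2 ^ j"
          using 1 by auto
        with \<open>0 < k\<close> have "j \<noteq> 0"
          by (intro notI) simp
        then obtain i where "j = Suc i"
          using not0_implies_Suc by blast
        with j show "\<exists>j. k = 2 ^ j"
          by auto
      qed (use 1 in \<open>auto intro: exI[of _ "Suc _"]\<close>)
      then show ?thesis
        using 1 \<open>0 < k\<close> less.IH[of k] multiplicity_two_fact_double[of k] by auto
    next
      case 2
      have "multiplicity 2 (fact m :: nat) < m - 1"
        using 2 \<open>0 < k\<close> multiplicity_two_fact_Suc_double[of k] multiplicity_two_fact_double[of k]
          multiplicity_two_fact_le[of k]
        by simp
      moreover have "m \<noteq> 2 ^ j" for j
      proof -
        have "odd m"
          using 2 by simp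
        then show ?thesis
          using False by (cases j) auto
      qed
      ultimately show ?thesis
        by auto
    qed
  qed
qed

lemma multiplicity_two_fact_odd_eq_iff:
  assumes "odd n" "3 \<le> n"
  shows "multiplicity 2 (fact n :: nat) = n - 2 \<longleftrightarrow> (\<exists>k>0. n = 2 ^ k + 1)"
proof -
  obtain m where m: "n = Suc (2 * m)"
    using assms(1) by (metis oddE Suc_eq_plus1)
  with assms(2) have "0 < m"
    by simp
  have "multiplicity 2 (fact n :: nat) = n - 2 \<longleftrightarrow> multiplicity 2 (fact (2 * m) :: nat) = 2 * m - 1"
    using m multiplicity_two_fact_Suc_double[of m] by simp
  also have "\<dots> \<longleftrightarrow> (\<exists>k. 2 * m = 2 ^ k)"
    using \<open>0 < m\<close> by (intro multiplicity_two_fact_eq_iff) simp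
  also have "\<dots> \<longleftrightarrow> (\<exists>k>0. n = 2 ^ k + 1)"
  proof
    assume "\<exists>k. 2 * m = 2 ^ k"
    then obtain k where "2 * m = 2 ^ k"
      by blast
    moreover from this have "k \<noteq> 0"
      using \<open>0 < m\<close> by (intro notI) simp
    ultimately show "\<exists>k>0. n = 2 ^ k + 1"
      using m by auto
  qed (use m in auto)
  finally show ?thesis .
qed

section \<open>The Frobenius formula on invariant subsets\<close>

definition invariant_colourings ::
    "nat \<Rightarrow> (nat \<Rightarrow> nat) \<Rightarrow> nat set \<Rightarrow> (nat \<Rightarrow> int) \<Rightarrow> (nat \<Rightarrow> nat) set" where
  "invariant_colourings n \<sigma> X c =
     {f \<in> X \<rightarrow>\<^sub>E {..<n}. (\<forall>x\<in>X. f (\<sigma> x) = f x) \<and> (\<forall>j<n. int (card {x\<in>X. f x = j}) = c j)}"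

text \<open>The Frobenius formula for \<open>\<sigma>\<close> restricted to an invariant set \<open>X\<close>, with the staircase absorbed
  into the shift: the character of \<open>\<lambda>\<close> has \<open>\<gamma> j = j - \<lambda> j\<close>.\<close>
definition frobenius_sum :: "nat \<Rightarrow> (nat \<Rightarrow> nat) \<Rightarrow> nat set \<Rightarrow> (nat \<Rightarrow> int) \<Rightarrow> int" where
  "frobenius_sum n \<sigma> X \<gamma> =
     (\<Sum>\<pi> | \<pi> permutes {..<n}. sign \<pi> * int (card (invariant_colourings n \<sigma> X (\<lambda>j. int (\<pi> j) - \<gamma> j))))"

lemma finite_invariant_colourings: "finite X \<Longrightarrow> finite (invariant_colourings n \<sigma> X c)"
  unfolding invariant_colourings_def by (rule finite_subset[of _ "X \<rightarrow>\<^sub>E {..<n}"]) (auto intro: finite_PiE)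

lemma frob_char_eq_frobenius_sum:
  "frob_char n lam \<sigma> = frobenius_sum n \<sigma> {..<n} (\<lambda>j. int j - int (lam j))"
  unfolding frob_char_def frobenius_sum_def
proof (intro sum.cong refl arg_cong[where f = "\<lambda>A. _ * int (card A)"])
  fix \<pi> assume "\<pi> \<in> {\<pi>. \<pi> permutes {..<n}}"
  then have "\<And>i. i < n \<Longrightarrow> \<pi> i < n"
    using permutes_in_image by fastforce
  then show "{f \<in> {..<n} \<rightarrow>\<^sub>E {..<n}. (\<forall>x<n. f (\<sigma> x) = f x) \<and>
        (\<forall>i<n. int (card {x. x < n \<and> f x = i}) = int (lam i) + int (n - 1 - i) - int (n - 1 - \<pi> i))}
      = invariant_colourings n \<sigma> {..<n} (\<lambda>j. int (\<pi> j) - (int j - int (lam j)))"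
    unfolding invariant_colourings_def
    by (intro Collect_cong conj_cong refl) (auto simp: of_nat_diff Suc_le_eq)
qed

lemma frobenius_sum_cong:
  "(\<And>j. j < n \<Longrightarrow> \<gamma> j = \<gamma>' j) \<Longrightarrow> frobenius_sum n \<sigma> X \<gamma> = frobenius_sum n \<sigma> X \<gamma>'"
  unfolding frobenius_sum_def invariant_colourings_def
  by (intro sum.cong refl arg_cong[where f = "\<lambda>A. _ * int (card A)"]) auto

lemma frobenius_sum_eq_0_if_large:
  assumes "k < n" "int n \<le> \<gamma> k"
  shows "frobenius_sum n \<sigma> X \<gamma> = 0"
  unfolding frobenius_sum_def
proof (intro sum.neutral ballI)
  fix \<pi> assume "\<pi> \<in> {\<pi>. \<pi> permutes {..<n}}"
  then have "\<pi> k < n"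
    using permutes_in_image assms(1) by fastforce
  then have "invariant_colourings n \<sigma> X (\<lambda>j. int (\<pi> j) - \<gamma> j) = {}"
    using assms unfolding invariant_colourings_def by force
  then show "sign \<pi> * int (card (invariant_colourings n \<sigma> X (\<lambda>j. int (\<pi> j) - \<gamma> j))) = 0"
    by simp
qed

lemma frobenius_sum_empty: "frobenius_sum n \<sigma> {} int = 1"
proof -
  have "invariant_colourings n \<sigma> {} (\<lambda>j. int (\<pi> j) - int j) = (if \<pi> = id then {\<lambda>_. undefined} else {})"
    if "\<pi> permutes {..<n}" for \<pi>
  proof -
    have "(\<forall>j<n. \<pi> j = j) \<longleftrightarrow> \<pi> = id"
      using permutes_not_in[OF that] by (auto simp: fun_eq_iff)
    then show ?thesis
      unfolding invariant_colourings_def by auto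
  qed
  then have "frobenius_sum n \<sigma> {} int = (\<Sum>\<pi> | \<pi> permutes {..<n}. if \<pi> = id then 1 else 0)"
    unfolding frobenius_sum_def by (intro sum.cong) auto
  also have "\<dots> = 1"
    by (simp add: finite_permutations)
  finally show ?thesis .
qed

lemma card_invariant_colourings_transpose:
  assumes "a < n" "b < n" "\<sigma> ` X \<subseteq> X"
  shows "card (invariant_colourings n \<sigma> X (c \<circ> transpose a b)) = card (invariant_colourings n \<sigma> X c)"
proof -
  let ?t = "transpose a b"
  let ?h = "\<lambda>f. restrict (?t \<circ> f) X"
  have swap_mem: "?h f \<in> invariant_colourings n \<sigma> X (c' \<circ> ?t)"
    if "f \<in> invariant_colourings n \<sigma> X c'" for f c'
  proof -
    have "?t y = j \<longleftrightarrow> y = ?t j" for y j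
      by (metis transpose_involutory)
    then have "{x\<in>X. ?h f x = j} = {x\<in>X. f x = ?t j}" for j
      by auto
    moreover have "?t j < n" if "j < n" for j
      using assms that by (auto simp: transpose_def)
    ultimately show ?thesis
      using that assms(3) unfolding invariant_colourings_def by (auto simp: PiE_iff)
  qed
  have swap_swap: "?h (?h f) = f" if "f \<in> invariant_colourings n \<sigma> X c'" for f c'
    using that unfolding invariant_colourings_def by (auto simp: fun_eq_iff PiE_iff extensional_def)
  have "bij_betw ?h (invariant_colourings n \<sigma> X (c \<circ> ?t)) (invariant_colourings n \<sigma> X c)"
    using swap_mem[of _ "c \<circ> ?t"] swap_mem[of _ c] swap_swap
    by (intro bij_betw_byWitness[where f' = ?h]) (auto simp: comp_assoc)
  then show ?thesis
    by (rule bij_betw_same_card)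
qed

lemma frobenius_sum_transpose:
  assumes "a < n" "b < n" "a \<noteq> b" "\<sigma> ` X \<subseteq> X"
  shows "frobenius_sum n \<sigma> X (\<gamma> \<circ> transpose a b) = - frobenius_sum n \<sigma> X \<gamma>"
proof -
  let ?t = "transpose a b"
  let ?N = "\<lambda>c. int (card (invariant_colourings n \<sigma> X c))"
  have t: "?t permutes {..<n}"
    using assms by (intro permutes_swap_id) auto
  have "frobenius_sum n \<sigma> X (\<gamma> \<circ> ?t) =
      (\<Sum>\<pi> | \<pi> permutes {..<n}. sign (\<pi> \<circ> ?t) * ?N ((\<lambda>j. int (\<pi> j) - \<gamma> j) \<circ> ?t))"
    unfolding frobenius_sum_def by (subst sum_permutations_compose_right[OF t]) (simp add: comp_def)
  also have "\<dots> = (\<Sum>\<pi> | \<pi> permutes {..<n}. - (sign \<pi> * ?N (\<lambda>j. int (\<pi> j) - \<gamma> j)))"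
  proof (intro sum.cong refl)
    fix \<pi> assume "\<pi> \<in> {\<pi>. \<pi> permutes {..<n}}"
    then have "permutation \<pi>" "permutation ?t"
      using t by (simp_all add: permutes_imp_permutation[OF finite_lessThan])
    then have "sign (\<pi> \<circ> ?t) = - sign \<pi>"
      using assms(3) by (simp add: sign_compose sign_swap_id)
    then show "sign (\<pi> \<circ> ?t) * ?N ((\<lambda>j. int (\<pi> j) - \<gamma> j) \<circ> ?t) = - (sign \<pi> * ?N (\<lambda>j. int (\<pi> j) - \<gamma> j))"
      using card_invariant_colourings_transpose[OF assms(1,2,4)] by simp
  qed
  also have "\<dots> = - frobenius_sum n \<sigma> X \<gamma>"
    unfolding frobenius_sum_def by (simp add: sum_negf)
  finally show ?thesis .
qed

lemma frobenius_sum_eq_0_if_eq: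
  assumes "a < n" "b < n" "a \<noteq> b" "\<sigma> ` X \<subseteq> X" "\<gamma> a = \<gamma> b"
  shows "frobenius_sum n \<sigma> X \<gamma> = 0"
proof -
  have "\<gamma> \<circ> transpose a b = \<gamma>"
    using assms(5) by (auto simp: fun_eq_iff transpose_def)
  then show ?thesis
    using frobenius_sum_transpose[OF assms(1-4), of \<gamma>] by simp
qed

lemma frobenius_sum_rotate:
  assumes "s \<le> p" "p < n" "\<sigma> ` X \<subseteq> X"
  shows "frobenius_sum n \<sigma> X (\<lambda>k. if k = s then \<gamma> p else if s < k \<and> k \<le> p then \<gamma> (k - 1) else \<gamma> k)
       = (-1) ^ (p - s) * frobenius_sum n \<sigma> X \<gamma>"
proof -
  obtain d where "p = s + d"
    using assms(1) le_Suc_ex by blast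
  with assms(2) show ?thesis
  proof (induction d arbitrary: p \<gamma>)
    case 0
    then show ?case
      by (auto intro!: arg_cong[where f = "frobenius_sum n \<sigma> X"])
  next
    case (Suc d)
    let ?t = "transpose (s + d) (Suc (s + d))"
    have "(\<lambda>k. if k = s then \<gamma> p else if s < k \<and> k \<le> p then \<gamma> (k - 1) else \<gamma> k)
        = (\<lambda>k. if k = s then (\<gamma> \<circ> ?t) (s + d) else if s < k \<and> k \<le> s + d then (\<gamma> \<circ> ?t) (k - 1) else (\<gamma> \<circ> ?t) k)"
      using Suc.prems by (auto simp: fun_eq_iff transpose_def)
    then show ?case
      using Suc.IH[of "s + d" "\<gamma> \<circ> ?t"] Suc.prems frobenius_sum_transpose[of "s + d" n "Suc (s + d)" \<sigma> X \<gamma>] assms(3)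
      by (simp add: comp_def)
  qed
qed

lemma card_colour_class_Diff:
  assumes "finite X" "C \<subseteq> X" "\<forall>y\<in>C. f y = j"
  shows "int (card {x\<in>X. f x = k}) = int (card {x\<in>X - C. f x = k}) + (if k = j then int (card C) else 0)"
proof -
  have "{x\<in>X. f x = k} = {x\<in>X - C. f x = k} \<union> (if k = j then C else {})"
    using assms(2,3) by auto
  moreover have "card ({x\<in>X - C. f x = k} \<union> C) = card {x\<in>X - C. f x = k} + card C"
    using assms(1,2) finite_subset by (intro card_Un_disjoint) auto
  ultimately show ?thesis
    by (cases "k = j") simp_all
qed

lemma restrict_mem_invariant_colourings_Diff_orbit:
  assumes "permutation \<sigma>" "finite X" "\<sigma> ` X \<subseteq> X" "x0 \<in> X" "f \<in> invariant_colourings n \<sigma> X c"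
  defines "C \<equiv> orbit \<sigma> x0"
  shows "restrict f (X - C) \<in> invariant_colourings n \<sigma> (X - C) (c(f x0 := c (f x0) - int (card C)))"
proof -
  have "\<forall>y\<in>C. f y = f x0"
    using assms(5) invariant_const_on_orbit[OF _ assms(3,4)] unfolding C_def invariant_colourings_def by auto
  then have "int (card {x\<in>X - C. f x = k}) = (c(f x0 := c (f x0) - int (card C))) k" if "k < n" for k
    using assms(5) that card_colour_class_Diff[OF assms(2) orbit_subset_invariant[OF assms(3,4)], of f "f x0" k]
    unfolding C_def invariant_colourings_def by auto
  moreover have "{x\<in>X - C. restrict f (X - C) x = k} = {x\<in>X - C. f x = k}" for k
    by auto
  ultimately show ?thesis
    using assms(5) image_Diff_orbit_subset[OF assms(1,3), of x0] unfolding C_def invariant_colourings_def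
    by (auto simp: PiE_iff)
qed

lemma extend_mem_invariant_colourings_Diff_orbit:
  assumes "permutation \<sigma>" "finite X" "\<sigma> ` X \<subseteq> X" "x0 \<in> X" "j < n"
  defines "C \<equiv> orbit \<sigma> x0"
  assumes "g \<in> invariant_colourings n \<sigma> (X - C) (c(j := c j - int (card C)))"
  shows "(\<lambda>x. if x \<in> C then j else g x) \<in> invariant_colourings n \<sigma> X c"
proof -
  let ?e = "\<lambda>x. if x \<in> C then j else g x"
  have C: "C \<subseteq> X"
    unfolding C_def by (rule orbit_subset_invariant[OF assms(3,4)])
  have "{x\<in>X - C. ?e x = k} = {x\<in>X - C. g x = k}" for k
    by auto
  then have "int (card {x\<in>X. ?e x = k}) = c k" if "k < n" for k
    using assms(7) that card_colour_class_Diff[OF assms(2) C, of ?e j k] unfolding invariant_colourings_def by auto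
  moreover have "?e (\<sigma> x) = ?e x" if "x \<in> X" for x
  proof -
    have "\<sigma> x \<in> C \<longleftrightarrow> x \<in> C"
      using that image_Diff_orbit_subset[OF assms(1,3)] unfolding C_def by (auto intro: orbit.step)
    then show ?thesis
      using assms(3,7) that unfolding invariant_colourings_def by auto
  qed
  ultimately show ?thesis
    using assms(5,7) C unfolding invariant_colourings_def by (auto simp: PiE_iff extensional_def)
qed

lemma card_invariant_colourings_fix_orbit:
  assumes "permutation \<sigma>" "finite X" "\<sigma> ` X \<subseteq> X" "x0 \<in> X" "j < n"
  defines "C \<equiv> orbit \<sigma> x0"
  shows "card {f \<in> invariant_colourings n \<sigma> X c. f x0 = j}
       = card (invariant_colourings n \<sigma> (X - C) (c(j := c j - int (card C))))"
proof (rule bij_betw_same_card[of "\<lambda>f. restrict f (X - C)"],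
       rule bij_betw_byWitness[where f' = "\<lambda>g x. if x \<in> C then j else g x"])
  let ?r = "\<lambda>f. restrict f (X - C)"
  let ?e = "\<lambda>g x. if x \<in> C then j else g x"
  have C: "C \<subseteq> X" "x0 \<in> C"
    using orbit_subset_invariant[OF assms(3,4)] permutation_self_in_orbit[OF assms(1)] unfolding C_def by auto
  show "\<forall>f\<in>{f \<in> invariant_colourings n \<sigma> X c. f x0 = j}. ?e (?r f) = f"
  proof
    fix f assume "f \<in> {f \<in> invariant_colourings n \<sigma> X c. f x0 = j}"
    then have f: "f \<in> invariant_colourings n \<sigma> X c" "f x0 = j"
      by auto
    then have "\<forall>y\<in>C. f y = j"
      using invariant_const_on_orbit[OF _ assms(3,4)] unfolding C_def invariant_colourings_def by auto
    then show "?e (?r f) = f"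
      using f(1) C(1) by (auto simp: fun_eq_iff invariant_colourings_def PiE_iff extensional_def)
  qed
  show "\<forall>g\<in>invariant_colourings n \<sigma> (X - C) (c(j := c j - int (card C))). ?r (?e g) = g"
    by (auto simp: fun_eq_iff invariant_colourings_def PiE_iff extensional_def)
  show "?r ` {f \<in> invariant_colourings n \<sigma> X c. f x0 = j}
      \<subseteq> invariant_colourings n \<sigma> (X - C) (c(j := c j - int (card C)))"
    using restrict_mem_invariant_colourings_Diff_orbit[OF assms(1-4)] unfolding C_def by blast
  show "?e ` invariant_colourings n \<sigma> (X - C) (c(j := c j - int (card C)))
      \<subseteq> {f \<in> invariant_colourings n \<sigma> X c. f x0 = j}"
    using extend_mem_invariant_colourings_Diff_orbit[OF assms(1-5)] C(2) unfolding C_def by auto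
qed

lemma card_invariant_colourings_remove_orbit:
  assumes "permutation \<sigma>" "finite X" "\<sigma> ` X \<subseteq> X" "x0 \<in> X"
  defines "C \<equiv> orbit \<sigma> x0"
  shows "card (invariant_colourings n \<sigma> X c)
       = (\<Sum>j<n. card (invariant_colourings n \<sigma> (X - C) (c(j := c j - int (card C)))))"
proof -
  let ?A = "\<lambda>j. {f \<in> invariant_colourings n \<sigma> X c. f x0 = j}"
  have "invariant_colourings n \<sigma> X c = (\<Union>j<n. ?A j)"
    using assms(4) by (auto simp: invariant_colourings_def)
  also have "card \<dots> = (\<Sum>j<n. card (?A j))"
    using finite_invariant_colourings[OF assms(2)] by (intro card_UN_disjoint) auto
  finally have "card (invariant_colourings n \<sigma> X c) = (\<Sum>j<n. card (?A j))" .
  then show ?thesis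
    unfolding C_def using card_invariant_colourings_fix_orbit[OF assms(1-4)] by simp
qed

theorem frobenius_sum_remove_orbit:
  assumes "permutation \<sigma>" "finite X" "\<sigma> ` X \<subseteq> X" "x0 \<in> X"
  defines "C \<equiv> orbit \<sigma> x0"
  shows "frobenius_sum n \<sigma> X \<gamma> = (\<Sum>j<n. frobenius_sum n \<sigma> (X - C) (\<gamma>(j := \<gamma> j + int (card C))))"
proof -
  have "(\<lambda>k. int (\<pi> k) - \<gamma> k)(j := int (\<pi> j) - \<gamma> j - int (card C))
      = (\<lambda>k. int (\<pi> k) - (\<gamma>(j := \<gamma> j + int (card C))) k)" for \<pi> j
    by auto
  then show ?thesis
    unfolding frobenius_sum_def C_def
    by (simp add: card_invariant_colourings_remove_orbit[OF assms(1-4)] sum_distrib_left sum.swap[where A = "{..<n}"])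
qed

section \<open>Hook characters\<close>

text \<open>\<open>hook_shift p (p - m)\<close> is the shift \<open>\<gamma> j = j - \<lambda> j\<close> of the hook \<open>\<lambda> = [m - p, 1^p]\<close>.\<close>
definition hook_shift :: "nat \<Rightarrow> int \<Rightarrow> nat \<Rightarrow> int" where
  "hook_shift p q k = (if k = 0 then q else if k \<le> p then int k - 1 else int k)"

definition hook_char :: "nat \<Rightarrow> (nat \<Rightarrow> nat) \<Rightarrow> nat set \<Rightarrow> nat \<Rightarrow> int" where
  "hook_char n \<sigma> X p = frobenius_sum n \<sigma> X (hook_shift p (int p - int (card X)))"

text \<open>On positions \<open>k \<ge> 1\<close> a hook shift takes each value in \<open>{0..<n} - {p}\<close> once, so the bumped
  entry is \<open>\<ge> n\<close> or repeats another entry, unless it is exactly \<open>p\<close>.\<close>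
lemma frobenius_sum_hook_shift_bump_eq_0:
  assumes "\<sigma> ` Y \<subseteq> Y" "1 \<le> j" "j < n" "p < n" "1 \<le> l" "\<not> (l \<le> p \<and> j = Suc p - l)"
  shows "frobenius_sum n \<sigma> Y ((hook_shift p q)(j := hook_shift p q j + int l)) = 0"
proof -
  let ?\<gamma> = "(hook_shift p q)(j := hook_shift p q j + int l)"
  define v where "v = (if j \<le> p then j - 1 + l else j + l)"
  have v: "?\<gamma> j = int v" "v \<noteq> p" "hook_shift p q j < int v"
    using assms(2,5,6) unfolding v_def hook_shift_def by auto
  show ?thesis
  proof (cases "n \<le> v")
    case True
    then show ?thesis
      using v(1) assms(3) by (intro frobenius_sum_eq_0_if_large[of j]) auto
  next
    case False
    define k where "k = (if v < p then Suc v else v)"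
    have "1 \<le> k" "k < n" "hook_shift p q k = int v"
      using False v(2) assms(4) unfolding k_def hook_shift_def by auto
    moreover have "k \<noteq> j"
      using v(3) calculation(3) by auto
    ultimately show ?thesis
      using v(1) assms(1,3) by (intro frobenius_sum_eq_0_if_eq[of k n j]) auto
  qed
qed

lemma frobenius_sum_hook_shift_long_leg:
  assumes "card Y \<le> p" "p < n" "\<sigma> ` Y \<subseteq> Y" "finite Y"
  shows "frobenius_sum n \<sigma> Y (hook_shift p (int p - int (card Y))) = (if Y = {} then (-1) ^ p else 0)"
proof (cases "Y = {}")
  case True
  have "hook_shift p (int p) = (\<lambda>k. if k = 0 then int p else if 0 < k \<and> k \<le> p then int (k - 1) else int k)"
    by (auto simp: fun_eq_iff hook_shift_def of_nat_diff)
  then show ?thesis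
    using True frobenius_sum_rotate[of 0 p n \<sigma> "{}" int] assms(2) frobenius_sum_empty by simp
next
  case False
  then have "0 < card Y"
    using assms(4) by (simp add: card_gt_0_iff)
  then have "hook_shift p (int p - int (card Y)) (p - card Y + 1) = hook_shift p (int p - int (card Y)) 0"
    using assms(1) by (auto simp: hook_shift_def)
  then have "frobenius_sum n \<sigma> Y (hook_shift p (int p - int (card Y))) = 0"
    using \<open>0 < card Y\<close> assms(1-3) by (intro frobenius_sum_eq_0_if_eq[of "p - card Y + 1" n 0]) auto
  with False show ?thesis
    by simp
qed

lemma frobenius_sum_hook_shift_bump_leg:
  assumes "1 \<le> l" "l \<le> p" "p < n" "\<sigma> ` Y \<subseteq> Y"
  shows "frobenius_sum n \<sigma> Y ((hook_shift p q)(Suc p - l := hook_shift p q (Suc p - l) + int l))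
       = (-1) ^ (l - 1) * frobenius_sum n \<sigma> Y (hook_shift (p - l) q)"
proof -
  let ?s = "Suc p - l"
  have "(hook_shift p q)(?s := hook_shift p q ?s + int l)
      = (\<lambda>k. if k = ?s then hook_shift (p - l) q p
             else if ?s < k \<and> k \<le> p then hook_shift (p - l) q (k - 1) else hook_shift (p - l) q k)"
    using assms(1,2) by (auto simp: fun_eq_iff hook_shift_def)
  moreover have "p - ?s = l - 1"
    using assms(1,2) by simp
  ultimately show ?thesis
    using frobenius_sum_rotate[of ?s p n \<sigma> Y "hook_shift (p - l) q"] assms by simp
qed

text \<open>The Murnaghan-Nakayama rule for hooks: the removed rim hook shortens the arm or the leg.\<close>
theorem hook_char_remove_orbit:
  assumes "permutation \<sigma>" "finite X" "\<sigma> ` X \<subseteq> X" "x0 \<in> X" "p < card X" "card X \<le> n"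
  defines "Y \<equiv> X - orbit \<sigma> x0" and "l \<equiv> card (orbit \<sigma> x0)"
  shows "hook_char n \<sigma> X p = (if p < card Y then hook_char n \<sigma> Y p else 0) + (if Y = {} then (-1) ^ p else 0)
           + (if l \<le> p then (-1) ^ (l - 1) * hook_char n \<sigma> Y (p - l) else 0)"
proof -
  have card_X: "card X = card Y + l" and l: "1 \<le> l"
    using card_orbit_Diff[OF assms(1-4)] unfolding Y_def l_def by auto
  have Y: "\<sigma> ` Y \<subseteq> Y" "finite Y"
    unfolding Y_def using image_Diff_orbit_subset[OF assms(1,3)] assms(2) by auto
  have p: "p < n"
    using assms(5,6) by simp
  define q where "q = int p - int (card X)"
  let ?F = "\<lambda>j. frobenius_sum n \<sigma> Y ((hook_shift p q)(j := hook_shift p q j + int l))"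
  have "hook_char n \<sigma> X p = (\<Sum>j<n. ?F j)"
    unfolding hook_char_def q_def Y_def l_def by (rule frobenius_sum_remove_orbit[OF assms(1-4)])
  also have "\<dots> = ?F 0 + (\<Sum>j\<in>{1..<n}. ?F j)"
    using p by (subst atLeast0LessThan[symmetric], subst sum.atLeast_Suc_lessThan) auto
  also have "?F 0 = (if p < card Y then hook_char n \<sigma> Y p else 0) + (if Y = {} then (-1) ^ p else 0)"
  proof -
    have "(hook_shift p q)(0 := hook_shift p q 0 + int l) = hook_shift p (int p - int (card Y))"
      using card_X by (auto simp: fun_eq_iff hook_shift_def q_def)
    then show ?thesis
      using frobenius_sum_hook_shift_long_leg[of Y p n \<sigma>] p Y by (auto simp: hook_char_def)
  qed
  also have "(\<Sum>j\<in>{1..<n}. ?F j) = (\<Sum>j\<in>{1..<n}. if l \<le> p \<and> j = Suc p - l then ?F j else 0)"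
    using frobenius_sum_hook_shift_bump_eq_0[OF Y(1) _ _ p l] by (intro sum.cong) auto
  also have "\<dots> = (if l \<le> p then ?F (Suc p - l) else 0)"
    using l p by (auto simp: sum.delta')
  also have "\<dots> = (if l \<le> p then (-1) ^ (l - 1) * hook_char n \<sigma> Y (p - l) else 0)"
    using frobenius_sum_hook_shift_bump_leg[OF l _ p Y(1)] card_X
    by (auto simp: hook_char_def q_def algebra_simps)
  finally show ?thesis
    by simp
qed

lemma sum_lessThan_add_if_less:
  "(\<Sum>p<m + (k::nat). if p < m then g p else 0) = (\<Sum>p<m. g p :: 'a :: comm_monoid_add)"
  by (induction k) auto

lemma sum_lessThan_add_if_ge:
  "(\<Sum>p<k + (m::nat). if k \<le> p then g p else 0) = (\<Sum>p<m. g (p + k) :: 'a :: comm_monoid_add)"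
  by (induction m) (auto simp: add_Suc_right add.commute)

definition hook_sum :: "(nat \<Rightarrow> int) \<Rightarrow> nat \<Rightarrow> (nat \<Rightarrow> nat) \<Rightarrow> nat set \<Rightarrow> int" where
  "hook_sum w n \<sigma> X = (\<Sum>p<card X. w p * hook_char n \<sigma> X p)"

lemma hook_sum_remove_orbit:
  assumes "permutation \<sigma>" "finite X" "\<sigma> ` X \<subseteq> X" "x0 \<in> X" "card X \<le> n"
  defines "Y \<equiv> X - orbit \<sigma> x0" and "l \<equiv> card (orbit \<sigma> x0)"
  shows "hook_sum w n \<sigma> X = hook_sum w n \<sigma> Y + (-1) ^ (l - 1) * hook_sum (\<lambda>p. w (p + l)) n \<sigma> Y
           + (if Y = {} then \<Sum>p<l. w p * (-1) ^ p else 0)"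
proof -
  have card_X: "card X = card Y + l"
    using card_orbit_Diff[OF assms(1-4)] unfolding Y_def l_def by auto
  have "hook_sum w n \<sigma> X = (\<Sum>p<card Y + l. if p < card Y then w p * hook_char n \<sigma> Y p else 0)
      + (\<Sum>p<l + card Y. if l \<le> p then w p * ((-1) ^ (l - 1) * hook_char n \<sigma> Y (p - l)) else 0)
      + (\<Sum>p<card X. if Y = {} then w p * (-1) ^ p else 0)"
    unfolding hook_sum_def Y_def l_def
    by (simp add: hook_char_remove_orbit[OF assms(1-4) _ assms(5)] distrib_left sum.distrib
                  card_X[unfolded Y_def l_def] add.commute if_distrib[of "\<lambda>x. w _ * x"] cong: if_cong)
  also have "\<dots> = hook_sum w n \<sigma> Y + (-1) ^ (l - 1) * hook_sum (\<lambda>p. w (p + l)) n \<sigma> Y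
           + (if Y = {} then \<Sum>p<l. w p * (-1) ^ p else 0)"
    unfolding sum_lessThan_add_if_less sum_lessThan_add_if_ge hook_sum_def
    using card_X by (simp add: sum_distrib_left algebra_simps)
  finally show ?thesis .
qed

lemma hook_sum_one_remove_orbit:
  assumes "permutation \<sigma>" "finite X" "\<sigma> ` X \<subseteq> X" "x0 \<in> X" "card X \<le> n"
  defines "Y \<equiv> X - orbit \<sigma> x0" and "l \<equiv> card (orbit \<sigma> x0)"
  shows "hook_sum (\<lambda>_. 1) n \<sigma> X = (1 + (-1) ^ (l - 1)) * hook_sum (\<lambda>_. 1) n \<sigma> Y
           + (if Y = {} then \<Sum>p<l. (-1) ^ p else 0)"
  using hook_sum_remove_orbit[OF assms(1-5), of "\<lambda>_. 1"] unfolding Y_def l_def by (simp add: algebra_simps)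

lemma hook_sum_sign_remove_orbit:
  assumes "permutation \<sigma>" "finite X" "\<sigma> ` X \<subseteq> X" "x0 \<in> X" "card X \<le> n"
  defines "Y \<equiv> X - orbit \<sigma> x0" and "l \<equiv> card (orbit \<sigma> x0)"
  shows "hook_sum (\<lambda>p. (-1) ^ p) n \<sigma> X = (if Y = {} then int l else 0)"
proof -
  have "1 \<le> l"
    using card_orbit_Diff(2)[OF assms(1-4)] unfolding l_def by simp
  then have "odd (l - 1 + l)"
    by presburger
  then have "(-1) ^ (l - 1) * (-1) ^ l = (-1 :: int)"
    by (simp add: power_add[symmetric])
  moreover have "hook_sum (\<lambda>p. (-1) ^ (p + l)) n \<sigma> Y = (-1) ^ l * hook_sum (\<lambda>p. (-1) ^ p) n \<sigma> Y"
    unfolding hook_sum_def by (simp add: power_add sum_distrib_left algebra_simps)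
  moreover have "(\<Sum>p<l. (-1) ^ p * (-1) ^ p) = int l"
    by (simp add: power_mult_distrib[symmetric])
  ultimately show ?thesis
    using hook_sum_remove_orbit[OF assms(1-5), of "\<lambda>p. (-1) ^ p"] unfolding Y_def l_def
    by (simp add: mult.assoc[symmetric])
qed

lemma hook_sum_one_id:
  assumes "finite X" "X \<noteq> {}" "card X \<le> n"
  shows "hook_sum (\<lambda>_. 1) n id X = 2 ^ (card X - 1)"
  using assms
proof (induction X rule: finite_ne_induct)
  case (singleton x)
  then have "hook_sum (\<lambda>_. 1) n id {x} = 1"
    using hook_sum_one_remove_orbit[of id "{x}" x n] by (simp add: hook_sum_def[of _ _ _ "{}"])
  then show ?case
    by (simp add: id_def)
next
  case (insert x F)
  then have "hook_sum (\<lambda>_. 1) n id (insert x F) = 2 * hook_sum (\<lambda>_. 1) n id F"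
    using hook_sum_one_remove_orbit[of id "insert x F" x n] by (simp add: insert_Diff_if)
  with insert show ?case
    by (simp add: id_def card_gt_0_iff power_Suc[symmetric])
qed

lemma hook_sum_sign_id:
  assumes "finite X" "2 \<le> card X" "card X \<le> n"
  shows "hook_sum (\<lambda>p. (-1) ^ p) n id X = 0"
proof -
  obtain x where x: "x \<in> X"
    using assms(2) by fastforce
  with assms(1,2) have "0 < card (X - {x})"
    by simp
  then have "X - {x} \<noteq> {}"
    by (metis card_gt_0_iff)
  then show ?thesis
    using hook_sum_sign_remove_orbit[of id X x n] x assms by simp
qed

section \<open>The characters \<open>\<Gamma>\<^sup>e\<close> and \<open>\<Gamma>\<^sup>o\<close>\<close>

lemma Gamma_eq_hook_char:
  assumes "1 \<le> i" "i \<le> n"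
  shows "Gamma n i \<sigma> = hook_char n \<sigma> {..<n} (n - i)"
  unfolding Gamma_def frob_char_eq_frobenius_sum hook_char_def
  by (rule frobenius_sum_cong) (use assms in \<open>auto simp: hook_def hook_shift_def of_nat_diff\<close>)

lemma hook_sum_lessThan:
  "hook_sum w n \<sigma> {..<n} = (\<Sum>i=1..n. w (n - i) * Gamma n i \<sigma>)"
  unfolding hook_sum_def
  by (rule sum.reindex_bij_witness[where i = "\<lambda>i. n - i" and j = "\<lambda>p. n - p"]) (auto simp: Gamma_eq_hook_char)

lemma minus_one_power_diff_odd:
  "odd n \<Longrightarrow> i \<le> n \<Longrightarrow> (-1 :: int) ^ (n - i) = (if even i then -1 else 1)"
  by (auto simp: minus_one_power_iff even_diff_nat)

lemma Gamma_e_eq_hook_sums: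
  assumes "odd n"
  shows "2 * Gamma_e n \<sigma> = hook_sum (\<lambda>_. 1) n \<sigma> {..<n} - hook_sum (\<lambda>p. (-1) ^ p) n \<sigma> {..<n}"
proof -
  have "hook_sum (\<lambda>_. 1) n \<sigma> {..<n} - hook_sum (\<lambda>p. (-1) ^ p) n \<sigma> {..<n}
      = (\<Sum>i\<in>{1..n}. 2 * (if even i then Gamma n i \<sigma> else 0))"
    unfolding hook_sum_lessThan sum_subtractf[symmetric]
    by (intro sum.cong) (use assms in \<open>auto simp: minus_one_power_diff_odd\<close>)
  then show ?thesis
    unfolding Gamma_e_def sum_distrib_left sum.inter_filter[OF finite_atLeastAtMost] by simp
qed

lemma Gamma_o_eq_hook_sums:
  assumes "odd n"
  shows "2 * Gamma_o n \<sigma> = hook_sum (\<lambda>_. 1) n \<sigma> {..<n} + hook_sum (\<lambda>p. (-1) ^ p) n \<sigma> {..<n}"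
proof -
  have "hook_sum (\<lambda>_. 1) n \<sigma> {..<n} + hook_sum (\<lambda>p. (-1) ^ p) n \<sigma> {..<n}
      = (\<Sum>i\<in>{1..n}. 2 * (if odd i then Gamma n i \<sigma> else 0))"
    unfolding hook_sum_lessThan sum.distrib[symmetric]
    by (intro sum.cong) (use assms in \<open>auto simp: minus_one_power_diff_odd\<close>)
  then show ?thesis
    unfolding Gamma_o_def sum_distrib_left sum.inter_filter[OF finite_atLeastAtMost] by simp
qed

lemma hook_sums_eq_0_if_even_perm_order:
  assumes "odd n" "\<sigma> permutes {..<n}" "even (perm_order \<sigma>)"
  shows "hook_sum (\<lambda>_. 1) n \<sigma> {..<n} = 0" "hook_sum (\<lambda>p. (-1) ^ p) n \<sigma> {..<n} = 0"
proof -
  obtain x where x: "x < n" "even (card (orbit \<sigma> x))"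
    using even_orbit_if_even_perm_order[OF assms(2,3)] by blast
  have \<sigma>: "permutation \<sigma>" "\<sigma> ` {..<n} \<subseteq> {..<n}"
    using assms(2) by (auto simp: permutes_imp_permutation[OF finite_lessThan] permutes_image)
  have "orbit \<sigma> x \<noteq> {..<n}"
  proof
    assume "orbit \<sigma> x = {..<n}"
    with x(2) assms(1) show False
      by simp
  qed
  then have "{..<n} - orbit \<sigma> x \<noteq> {}"
    using orbit_subset_invariant[OF \<sigma>(2)] x(1) by blast
  moreover have "0 < card (orbit \<sigma> x)"
    using card_orbit_Diff(2)[OF \<sigma>(1) _ \<sigma>(2)] x(1) by simp
  ultimately show "hook_sum (\<lambda>_. 1) n \<sigma> {..<n} = 0" "hook_sum (\<lambda>p. (-1) ^ p) n \<sigma> {..<n} = 0"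
    using hook_sum_one_remove_orbit[OF \<sigma>(1) _ \<sigma>(2), of x n] hook_sum_sign_remove_orbit[OF \<sigma>(1) _ \<sigma>(2), of x n]
      x(1,2) by (simp_all add: minus_one_power_iff even_diff_nat)
qed

lemma Gamma_e_id:
  assumes "odd n" "3 \<le> n"
  shows "Gamma_e n id = 2 ^ (n - 2)"
proof -
  have "0 \<in> {..<n}"
    using assms(2) by simp
  then have "{..<n} \<noteq> {}"
    by blast
  then have "2 * Gamma_e n id = 2 ^ (n - 1)"
    using Gamma_e_eq_hook_sums[OF assms(1)] hook_sum_one_id[of "{..<n}" n] hook_sum_sign_id[of "{..<n}" n] assms(2)
    by simp
  moreover have "(2::int) ^ (n - 1) = 2 * 2 ^ (n - 2)"
    using assms(2) by (simp add: power_Suc[symmetric] Suc_diff_Suc numeral_2_eq_2)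
  ultimately show ?thesis
    by simp
qed

lemma Gamma_e_id_eq_iff:
  assumes "odd n"
  shows "Gamma_e n id = 2 ^ multiplicity 2 (fact n :: nat) \<longleftrightarrow> (\<exists>k>0. n = 2 ^ k + 1)"
proof (cases "n = 1")
  case True
  then have "Gamma_e n id = 0"
    unfolding Gamma_e_def by (intro sum.neutral) auto
  with True show ?thesis
    by simp
next
  case False
  with assms have "3 \<le> n"
    by presburger
  then have "Gamma_e n id = 2 ^ multiplicity 2 (fact n :: nat) \<longleftrightarrow> multiplicity 2 (fact n :: nat) = n - 2"
    using Gamma_e_id[OF assms] by (auto simp: power_inject_exp)
  then show ?thesis
    using multiplicity_two_fact_odd_eq_iff[OF assms \<open>3 \<le> n\<close>] by simp
qed

theorem proposition6p8:
  fixes n :: nat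
  assumes "odd n"
  shows "(\<forall>\<sigma>. \<sigma> permutes {..<n} \<and> even (perm_order \<sigma>) \<longrightarrow>
            Gamma_e n \<sigma> = 0 \<and> Gamma_o n \<sigma> = 0)
         \<and> (steinberg_like2 n (Gamma_e n) \<longleftrightarrow> (\<exists>k::nat. 0 < k \<and> n = 2 ^ k + 1))"
proof -
  have vanish: "\<forall>\<sigma>. \<sigma> permutes {..<n} \<and> even (perm_order \<sigma>) \<longrightarrow> Gamma_e n \<sigma> = 0 \<and> Gamma_o n \<sigma> = 0"
  proof (intro allI impI)
    fix \<sigma> assume "\<sigma> permutes {..<n} \<and> even (perm_order \<sigma>)"
    then have "2 * Gamma_e n \<sigma> = 0" "2 * Gamma_o n \<sigma> = 0"
      using hook_sums_eq_0_if_even_perm_order[OF assms] Gamma_e_eq_hook_sums[OF assms] Gamma_o_eq_hook_sums[OF assms]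
      by simp_all
    then show "Gamma_e n \<sigma> = 0 \<and> Gamma_o n \<sigma> = 0"
      by simp
  qed
  moreover from vanish have "steinberg_like2 n (Gamma_e n) \<longleftrightarrow> Gamma_e n id = 2 ^ multiplicity 2 (fact n :: nat)"
    unfolding steinberg_like2_def by blast
  ultimately show ?thesis
    using Gamma_e_id_eq_iff[OF assms] by simp
qed

end
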